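(* The deformed Fock–Goncharov tropicalization of the generalized Markov tree is the classical Euclid tree, in the following precise sense. Let $(x_1,x_2,x_3)\in\mathbb{Z}^3$ satisfy the tropicalized equation $\max(2x_1,2x_2,2x_3)=x_1+x_2+x_3$, and let $i\in\{1,2,3\}$ be such that $x_i\neq\max(x_1,x_2,x_3)$. Then the tropicalized mutation $\mu_i^t$ coincides with the classical Euclid mutation $\mathcal{M}_i$ at $(x_1,x_2,x_3)$: $\mu_1^t(x)=(x_2+x_3,x_2,x_3)$ if $i=1$, $\mu_2^t(x)=(x_1,x_1+x_3,x_3)$ if $i=2$, $\mu_3^t(x)=(x_1,x_2,x_1+x_2)$ if $i=3$. Consequently, along the generalized Markov tree (where at every step from a triple other than $(1,1,1)$ the mutated coordinate is not the maximal one), the tropicalized mutation rules are exactly the generating rules of the classical Euclid tree.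
   Context: Fix $\lambda_1,\lambda_2,\lambda_3\in\mathbb{Z}_{\ge 0}$. The generalized Markov equation is $X_1^2+X_2^2+X_3^2+\lambda_3X_1X_2+\lambda_1X_2X_3+\lambda_2X_3X_1=(3+\lambda_1+\lambda_2+\lambda_3)X_1X_2X_3$. Its mutations are $\mu_1(x_1,x_2,x_3)=(\frac{x_2^2+\lambda_1x_2x_3+x_3^2}{x_1},x_2,x_3)$, $\mu_2(x_1,x_2,x_3)=(x_1,\frac{x_1^2+\lambda_2x_1x_3+x_3^2}{x_2},x_3)$, $\mu_3(x_1,x_2,x_3)=(x_1,x_2,\frac{x_1^2+\lambda_3x_1x_2+x_2^2}{x_3})$; all positive integer solutions (generalized Markov triples) are obtained from $(1,1,1)$ by these mutations, forming the generalized Markov tree, and for a triple $\neq(1,1,1)$ obtained this way, the next mutations are applied at coordinates that are not the maximal one. Fock–Goncharov tropicalization of a subtraction-free expression replaces multiplication by addition, addition by $\max$ and ignores positive coefficients; the "deformed" version further replaces the tropical variables by integer variables $x_i$, requires that an expression equal to a constant be sent to $0$, and requires that $x_i$ is maximal among $x_1,x_2,x_3$ exactly when $X_i$ is maximal among $X_1,X_2,X_3$. This turns the generalized Markov equation into $\max(2x_1,2x_2,2x_3)=x_1+x_2+x_3$ and the mutations into $\mu_1^t(x)=(\max(2x_2,2x_3)-x_1,x_2,x_3)$, $\mu_2^t(x)=(x_1,\max(2x_1,2x_3)-x_2,x_3)$, $\mu_3^t(x)=(x_1,x_2,\max(2x_1,2x_2)-x_3)$. The classical Euclid mutations are $\mathcal{M}_1(x,y,z)=(y+z,y,z)$,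 $\mathcal{M}_2(x,y,z)=(x,x+z,z)$, $\mathcal{M}_3(x,y,z)=(x,y,x+y)$. *)

theory Defs
  imports Main
begin

type_synonym triple = "int \<times> int \<times> int"

definition trop_markov :: "triple \<Rightarrow> bool" where
  "trop_markov x = (case x of (x1, x2, x3) \<Rightarrow>
     max (2*x1) (max (2*x2) (2*x3)) = x1 + x2 + x3)"

definition coord :: "nat \<Rightarrow> triple \<Rightarrow> int" where
  "coord i x = (case x of (x1, x2, x3) \<Rightarrow>
     (if i = 1 then x1 else if i = 2 then x2 else x3))"

definition max3 :: "triple \<Rightarrow> int" where
  "max3 x = (case x of (x1, x2, x3) \<Rightarrow> max x1 (max x2 x3))"

definition trop_mut :: "nat \<Rightarrow> triple \<Rightarrow> triple" where
  "trop_mut i x = (case x of (x1, x2, x3) \<Rightarrow>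
     (if i = 1 then (max (2*x2) (2*x3) - x1, x2, x3)
      else if i = 2 then (x1, max (2*x1) (2*x3) - x2, x3)
      else (x1, x2, max (2*x1) (2*x2) - x3)))"

definition euclid_mut :: "nat \<Rightarrow> triple \<Rightarrow> triple" where
  "euclid_mut i x = (case x of (x1, x2, x3) \<Rightarrow>
     (if i = 1 then (x2 + x3, x2, x3)
      else if i = 2 then (x1, x1 + x3, x3)
      else (x1, x2, x1 + x2)))"

end

theory Submission
  imports Defs
begin

text \<open>If \<open>x\<^sub>i\<close> is not maximal, then \<open>2 x\<^sub>i\<close> does not realise the maximum in the
  tropical Markov equation, so the doubled maximum of the other two coordinates equals
  \<open>x\<^sub>1 + x\<^sub>2 + x\<^sub>3\<close>; subtracting \<open>x\<^sub>i\<close> leaves their sum, which is the Euclid mutation.\<close>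

lemma max_double_minus_eq_add:
  fixes a b c :: "'a::linordered_idom"
  assumes "max (2 * a) (max (2 * b) (2 * c)) = a + b + c"
    and "a < max b c"
  shows "max (2 * b) (2 * c) - a = b + c"
proof -
  have "2 * a < max (2 * b) (2 * c)"
    using assms(2) by (auto simp: max_def)
  then have "max (2 * b) (2 * c) = a + b + c"
    using assms(1) by (simp add: max_def split: if_splits)
  then show ?thesis
    by (simp add: algebra_simps)
qed

lemma coord_not_max_less:
  assumes "x = (x1, x2, x3)" and "coord i x \<noteq> max3 x"
  shows "i = 1 \<Longrightarrow> x1 < max x2 x3"
    and "i = 2 \<Longrightarrow> x2 < max x1 x3"
    and "i = 3 \<Longrightarrow> x3 < max x1 x2"
  using assms by (auto simp: coord_def max3_def max_def split: if_splits)

theorem theorem3p7: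
  fixes x :: triple and i :: nat
  assumes "trop_markov x"
    and "i \<in> {1, 2, 3}"
    and "coord i x \<noteq> max3 x"
  shows "trop_mut i x = euclid_mut i x"
proof -
  obtain x1 x2 x3 where x: "x = (x1, x2, x3)"
    by (cases x) auto
  have markov: "max (2 * x1) (max (2 * x2) (2 * x3)) = x1 + x2 + x3"
    using assms(1) by (simp add: trop_markov_def x)
  have "max (2 * x2) (max (2 * x1) (2 * x3)) = x2 + x1 + x3"
    and "max (2 * x3) (max (2 * x1) (2 * x2)) = x3 + x1 + x2"
    using markov by (simp_all add: max.left_commute max.commute algebra_simps)
  with markov coord_not_max_less[OF x assms(3)] assms(2) show ?thesis
    by (auto simp: trop_mut_def euclid_mut_def x max_double_minus_eq_add)
qed

end
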